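(* Let $\Omega\subset\mathbb R^d$ be bounded and convex, let $\sigma_a,\sigma_b$ be bounded positive functions on $\Omega$, and suppose there is no scattering ($\sigma_s\equiv 0$). Fix a direction $\mathbf v'\in\mathbb S^{d-1}$ and a point $\mathbf x\in\Omega$, set $\mathbf x':=\mathbf x-\tau_-(\mathbf x,\mathbf v')\mathbf v'\in\partial\Omega$, $\widetilde\sigma_a(s):=\sigma_a(\mathbf x'+s\mathbf v')$, $\widetilde\sigma_b(s):=\sigma_b(\mathbf x'+s\mathbf v')$. For $j=1,2$, let $u_j\ge 0$ be the solution of $\mathbf v\cdot\nabla u_j+\sigma_a u_j+\sigma_b\langle u_j\rangle u_j=0$ in $\Omega\times\mathbb S^{d-1}$ with collimated incoming boundary source $u_j=\mathfrak g_j(\mathbf x)\delta(\mathbf v-\mathbf v')$, and let $\phi_j(s):=\langle u_j\rangle(\mathbf x'+s\mathbf v')$, which satisfies \[ \phi_j(t)=\mathfrak g_j(\mathbf x')\exp\Big(-\int_0^t\big(\widetilde\sigma_a(s)+\widetilde\sigma_b(s)\phi_j(s)\big)ds\Big),\qquad t\in[0,\tau_-(\mathbf x,\mathbf v')]. \] If $\mathfrak g_1>\mathfrak g_2>0$, then $\phi_1(t)>\phi_2(t)$ for all $t\in[0,\tau_-(\mathbf x,\mathbf v')]$.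
   Context: $\mathbb S^{d-1}$ is the unit sphere with normalized surface measure $d\mathbf v$ and $\langle u\rangle(\mathbf x):=\int_{\mathbb S^{d-1}}u(\mathbf x,\mathbf v)d\mathbf v$. For $(\mathbf x,\mathbf v)\in\Omega\times\mathbb S^{d-1}$, $\tau_-(\mathbf x,\mathbf v):=\sup\{s\in\mathbb R:\mathbf x-s\mathbf v\in\Omega\}$. The boundary strengths $\mathfrak g_1,\mathfrak g_2$ are functions on $\partial\Omega$. *)

theory Defs
  imports "HOL-Analysis.Analysis"
begin

definition tau_minus :: "'a::real_normed_vector set \<Rightarrow> 'a \<Rightarrow> 'a \<Rightarrow> real" where
  "tau_minus \<Omega> x v = Sup {s::real. x - s *\<^sub>R v \<in> \<Omega>}"

end

theory Submission
  imports Defs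
begin

text \<open>
  Write \<open>H = ln (\<phi>1 / \<phi>2)\<close>. Subtracting the logarithms of the two integral equations, the
  absorption \<open>\<sigma>a\<close> cancels and \<open>H r - H t = \<integral>\<^sub>r\<^sup>t \<sigma>b (\<phi>1 - \<phi>2)\<close>. As long as \<open>\<phi>1 > \<phi>2\<close>,
  \<open>H\<close> is positive and non-increasing, and \<open>0 \<le> \<phi>1 - \<phi>2 = \<phi>1 (1 - exp (-H)) \<le> g1 H\<close>, so on a
  short interval \<open>[r, t]\<close> of length at most \<open>1 / (2 B g1)\<close> the function \<open>H\<close> loses at most half
  of its value. Hence \<open>H\<close> stays positive at the first time where \<open>\<phi>1 \<le> \<phi>2\<close> could occur,
  which is absurd. Convexity of \<open>\<Omega>\<close> keeps the segment from the entry point \<open>x'\<close> to \<open>x\<close>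
  inside \<open>\<Omega>\<close>, where the coefficients are positive and bounded, and \<open>x'\<close> lies on the
  boundary, where \<open>g1 > g2 > 0\<close>.
\<close>

lemma bdd_above_backward_times:
  fixes \<Omega> :: "'a::real_normed_vector set"
  assumes "bounded \<Omega>" "v \<noteq> 0"
  shows "bdd_above {s. x - s *\<^sub>R v \<in> \<Omega>}"
proof -
  obtain M where M: "\<And>y. y \<in> \<Omega> \<Longrightarrow> norm y \<le> M"
    using assms(1) bounded_iff by blast
  show ?thesis
  proof (rule bdd_aboveI)
    fix s assume "s \<in> {s. x - s *\<^sub>R v \<in> \<Omega>}"
    then have "norm (x - (x - s *\<^sub>R v)) \<le> norm x + M"
      using M norm_triangle_ineq4[of x "x - s *\<^sub>R v"] by fastforce
    moreover have "s * norm v \<le> \<bar>s\<bar> * norm v"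
      by (simp add: mult_right_mono)
    ultimately have "s * norm v \<le> norm x + M"
      by simp
    then show "s \<le> (norm x + M) / norm v"
      using assms(2) by (simp add: pos_le_divide_eq)
  qed
qed

lemma backward_point_in_convex:
  fixes \<Omega> :: "'a::real_normed_vector set"
  assumes "convex \<Omega>" "x \<in> \<Omega>" "0 \<le> s" "s < tau_minus \<Omega> x v"
  shows "x - s *\<^sub>R v \<in> \<Omega>"
proof -
  have "0 \<in> {s. x - s *\<^sub>R v \<in> \<Omega>}"
    using assms(2) by simp
  then have ne: "{s. x - s *\<^sub>R v \<in> \<Omega>} \<noteq> {}"
    by blast
  have "s < Sup {s. x - s *\<^sub>R v \<in> \<Omega>}"
    using assms(4) unfolding tau_minus_def .
  then obtain s' where s': "x - s' *\<^sub>R v \<in> \<Omega>" "s < s'"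
    using less_cSupD[OF ne] by blast
  define u where "u = s / s'"
  have u: "0 \<le> u" "u \<le> 1" "u * s' = s"
    using assms(3) s'(2) by (auto simp: u_def)
  have "(1 - u) *\<^sub>R x + u *\<^sub>R (x - s' *\<^sub>R v) \<in> \<Omega>"
    using convexD[OF assms(1,2) s'(1)] u by simp
  also have "(1 - u) *\<^sub>R x + u *\<^sub>R (x - s' *\<^sub>R v) = x - (u * s') *\<^sub>R v"
    by (simp add: algebra_simps)
  finally show ?thesis
    using u(3) by simp
qed

lemma backward_exit_point_in_frontier:
  fixes \<Omega> :: "'a::real_normed_vector set"
  assumes "bounded \<Omega>" "v \<noteq> 0" "x \<in> \<Omega>"
  shows "x - tau_minus \<Omega> x v *\<^sub>R v \<in> frontier \<Omega>"
proof -
  define A where "A = {s. x - s *\<^sub>R v \<in> \<Omega>}"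
  define T where "T = tau_minus \<Omega> x v"
  have bdd: "bdd_above A"
    unfolding A_def using assms(1,2) by (rule bdd_above_backward_times)
  have "T \<in> closure A"
    unfolding T_def tau_minus_def A_def[symmetric]
  proof (rule closure_contains_Sup[OF _ bdd])
    have "0 \<in> A"
      using assms(3) by (simp add: A_def)
    then show "A \<noteq> {}"
      by blast
  qed
  moreover have "(\<lambda>s. x - s *\<^sub>R v) ` closure A \<subseteq> closure \<Omega>"
  proof (rule image_closure_subset)
    show "continuous_on (closure A) (\<lambda>s. x - s *\<^sub>R v)"
      by (intro continuous_intros)
    show "(\<lambda>s. x - s *\<^sub>R v) ` A \<subseteq> closure \<Omega>"
      using closure_subset by (auto simp: A_def)
  qed simp
  ultimately have "x - T *\<^sub>R v \<in> closure \<Omega>"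
    by blast
  moreover have "x - T *\<^sub>R v \<notin> interior \<Omega>"
  proof
    assume "x - T *\<^sub>R v \<in> interior \<Omega>"
    then obtain e where e: "0 < e" "ball (x - T *\<^sub>R v) e \<subseteq> \<Omega>"
      using mem_interior by blast
    define d where "d = e / (2 * norm v)"
    have "0 < d"
      using assms(2) e(1) by (simp add: d_def)
    have "dist (x - T *\<^sub>R v) (x - (T + d) *\<^sub>R v) = e / 2"
      using assms(2) e(1) by (simp add: d_def dist_norm algebra_simps)
    then have "T + d \<in> A"
      using e unfolding A_def by auto
    then have "T + d \<le> T"
      unfolding T_def tau_minus_def A_def[symmetric] using bdd by (rule cSup_upper)
    with \<open>0 < d\<close> show False
      by simp
  qed
  ultimately show ?thesis
    unfolding T_def frontier_def by simp
qed

definition attenuation_eq ::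
    "(real \<Rightarrow> real) \<Rightarrow> (real \<Rightarrow> real) \<Rightarrow> real \<Rightarrow> real \<Rightarrow> (real \<Rightarrow> real) \<Rightarrow> bool" where
  "attenuation_eq a b c T \<phi> \<longleftrightarrow>
     (\<forall>t\<in>{0..T}. (\<lambda>s. a s + b s * \<phi> s) integrable_on {0..t}
        \<and> \<phi> t = c * exp (- integral {0..t} (\<lambda>s. a s + b s * \<phi> s)))"

lemma attenuation_eq_continuous:
  assumes "attenuation_eq a b c T \<phi>"
  shows "continuous_on {0..T} \<phi>"
proof (cases "0 \<le> T")
  case True
  define f where "f = (\<lambda>s. a s + b s * \<phi> s)"
  have "f integrable_on {0..T}"
    using assms True unfolding attenuation_eq_def f_def by auto
  then have "continuous_on {0..T} (\<lambda>t. c * exp (- integral {0..t} f))"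
    by (intro continuous_intros indefinite_integral_continuous_1)
  moreover have "\<And>t. t \<in> {0..T} \<Longrightarrow> c * exp (- integral {0..t} f) = \<phi> t"
    using assms unfolding attenuation_eq_def f_def by simp
  ultimately show ?thesis
    by (rule continuous_on_eq)
qed simp

lemma attenuation_eq_initial:
  assumes "attenuation_eq a b c T \<phi>" "0 \<le> T"
  shows "\<phi> 0 = c"
  using assms unfolding attenuation_eq_def by auto

lemma attenuation_eq_pos:
  assumes "attenuation_eq a b c T \<phi>" "0 < c" "t \<in> {0..T}"
  shows "0 < \<phi> t"
  using assms unfolding attenuation_eq_def by auto

lemma attenuation_eq_le_initial:
  assumes "attenuation_eq a b c T \<phi>" "0 < c" "t \<in> {0..T}"
    and "\<And>s. 0 < s \<Longrightarrow> s \<le> T \<Longrightarrow> 0 \<le> a s \<and> 0 \<le> b s"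
  shows "\<phi> t \<le> c"
proof -
  define f where "f = (\<lambda>s. a s + b s * \<phi> s)"
  have f: "f integrable_on {0..t}" "\<phi> t = c * exp (- integral {0..t} f)"
    using assms(1,3) unfolding attenuation_eq_def f_def by auto
  have "0 \<le> integral {0<..<t} f"
  proof (rule integral_nonneg)
    show "f integrable_on {0<..<t}"
      using f(1) integrable_on_open_interval_real by blast
    fix s assume "s \<in> {0<..<t}"
    then show "0 \<le> f s"
      using assms(3) assms(4)[of s] attenuation_eq_pos[OF assms(1,2), of s] by (simp add: f_def)
  qed
  then show ?thesis
    using f(2) assms(2) by (simp add: integral_open_interval_real)
qed

lemma attenuation_eq_integrable:
  assumes "attenuation_eq a b c T \<phi>" "0 \<le> r" "r \<le> t" "t \<le> T"
  shows "(\<lambda>s. a s + b s * \<phi> s) integrable_on {r..t}"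
proof -
  have "(\<lambda>s. a s + b s * \<phi> s) integrable_on {0..t}"
    using assms unfolding attenuation_eq_def by auto
  then show ?thesis
    by (rule integrable_subinterval_real) (use assms(2,3) in auto)
qed

lemma attenuation_eq_diff_integrable:
  assumes "attenuation_eq a b c1 T \<phi>1" "attenuation_eq a b c2 T \<phi>2" "0 \<le> r" "r \<le> t" "t \<le> T"
  shows "(\<lambda>s. b s * (\<phi>1 s - \<phi>2 s)) integrable_on {r..t}"
proof -
  have "(\<lambda>s. (a s + b s * \<phi>1 s) - (a s + b s * \<phi>2 s)) integrable_on {r..t}"
    using assms by (intro integrable_diff attenuation_eq_integrable)
  then show ?thesis
    by (simp add: algebra_simps)
qed

lemma attenuation_eq_ln_increment:
  assumes "attenuation_eq a b c T \<phi>" "0 < c" "0 \<le> r" "r \<le> t" "t \<le> T"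
  shows "ln (\<phi> r) - ln (\<phi> t) = integral {r..t} (\<lambda>s. a s + b s * \<phi> s)"
proof -
  define f where "f = (\<lambda>s. a s + b s * \<phi> s)"
  have ln_\<phi>: "ln (\<phi> u) = ln c - integral {0..u} f" if "u \<in> {0..T}" for u
    using assms(1,2) that unfolding attenuation_eq_def f_def by (simp add: ln_mult)
  have "f integrable_on {0..t}"
    using assms unfolding attenuation_eq_def f_def by auto
  then have "integral {0..t} f = integral {0..r} f + integral {r..t} f"
    using assms(3,4) by (simp add: Henstock_Kurzweil_Integration.integral_combine)
  then show ?thesis
    using ln_\<phi> assms(3-5) by (simp add: f_def)
qed

lemma attenuation_eq_ln_ratio_increment:
  assumes "attenuation_eq a b c1 T \<phi>1" "attenuation_eq a b c2 T \<phi>2" "0 < c1" "0 < c2"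
    and "0 \<le> r" "r \<le> t" "t \<le> T"
  shows "ln (\<phi>1 r / \<phi>2 r) - ln (\<phi>1 t / \<phi>2 t) = integral {r..t} (\<lambda>s. b s * (\<phi>1 s - \<phi>2 s))"
proof -
  have "0 < \<phi>1 r" "0 < \<phi>2 r" "0 < \<phi>1 t" "0 < \<phi>2 t"
    using attenuation_eq_pos assms by auto
  then have "ln (\<phi>1 r / \<phi>2 r) - ln (\<phi>1 t / \<phi>2 t) = (ln (\<phi>1 r) - ln (\<phi>1 t)) - (ln (\<phi>2 r) - ln (\<phi>2 t))"
    by (simp add: ln_div)
  also have "\<dots> = integral {r..t} (\<lambda>s. a s + b s * \<phi>1 s) - integral {r..t} (\<lambda>s. a s + b s * \<phi>2 s)"
    using assms by (simp add: attenuation_eq_ln_increment)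
  also have "\<dots> = integral {r..t} (\<lambda>s. (a s + b s * \<phi>1 s) - (a s + b s * \<phi>2 s))"
    by (rule integral_diff[symmetric]) (use assms in \<open>auto intro: attenuation_eq_integrable\<close>)
  finally show ?thesis
    by (simp add: algebra_simps)
qed

lemma attenuation_eq_less_persists:
  assumes eq1: "attenuation_eq a b c1 T \<phi>1" and eq2: "attenuation_eq a b c2 T \<phi>2"
    and "0 < c1" "0 < c2"
    and coeff: "\<And>s. 0 < s \<Longrightarrow> s \<le> T \<Longrightarrow> 0 \<le> a s \<and> 0 \<le> b s \<and> b s \<le> B"
    and "0 < t0" "t0 \<le> T"
    and less: "\<And>s. 0 \<le> s \<Longrightarrow> s < t0 \<Longrightarrow> \<phi>2 s < \<phi>1 s"
  shows "\<phi>2 t0 < \<phi>1 t0"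
proof -
  define H where "H t = ln (\<phi>1 t / \<phi>2 t)" for t
  define g where "g = (\<lambda>s. b s * (\<phi>1 s - \<phi>2 s))"
  define L where "L = B * c1"
  have pos: "0 < \<phi>1 s" "0 < \<phi>2 s" if "0 \<le> s" "s \<le> T" for s
    using attenuation_eq_pos assms(1-4) that by auto
  have H_increment: "H r - H t = integral {r<..<t} g" if "0 \<le> r" "r \<le> t" "t \<le> t0" for r t
    using attenuation_eq_ln_ratio_increment[OF assms(1-4)] that \<open>t0 \<le> T\<close>
    by (simp add: H_def g_def integral_open_interval_real)
  have g_integrable: "g integrable_on {r<..<t}" if "0 \<le> r" "r \<le> t" "t \<le> t0" for r t
    using attenuation_eq_diff_integrable[OF eq1 eq2] that \<open>t0 \<le> T\<close>
    by (simp add: g_def integrable_on_open_interval_real)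
  have g_nonneg: "0 \<le> g s" if "0 < s" "s < t0" for s
    using coeff[of s] less[of s] that \<open>t0 \<le> T\<close> by (simp add: g_def)
  have H_pos: "0 < H s" if "0 \<le> s" "s < t0" for s
    using less[OF that] pos[of s] that \<open>t0 \<le> T\<close> by (simp add: H_def)
  have H_antimono: "H t \<le> H r" if "0 \<le> r" "r \<le> t" "t \<le> t0" for r t
    using integral_nonneg[OF g_integrable[OF that]] g_nonneg that H_increment[OF that] by simp
  have g_le: "g s \<le> L * H r" if "0 \<le> r" "s \<in> {r<..<t0}" for r s
  proof -
    have s: "0 < s" "s < t0" "s \<le> T"
      using that \<open>t0 \<le> T\<close> by auto
    have "\<phi>2 s = \<phi>1 s * exp (- H s)"
      using pos[of s] s by (simp add: H_def exp_minus)
    then have "\<phi>1 s - \<phi>2 s = \<phi>1 s * (1 - exp (- H s))"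
      by (simp add: algebra_simps)
    also have "\<dots> \<le> \<phi>1 s * H s"
      using exp_ge_add_one_self[of "- H s"] pos[of s] s by (simp add: mult_left_mono)
    also have "\<dots> \<le> c1 * H r"
      using attenuation_eq_le_initial[OF eq1 \<open>0 < c1\<close>, of s] coeff H_pos[of s] H_antimono[of r s]
        that s \<open>0 < c1\<close>
      by (intro mult_mono) auto
    finally have "\<phi>1 s - \<phi>2 s \<le> c1 * H r" .
    then have "b s * (\<phi>1 s - \<phi>2 s) \<le> B * (c1 * H r)"
      using coeff[OF s(1,3)] less[of s] s by (intro mult_mono) auto
    then show ?thesis
      by (simp add: g_def L_def mult.assoc)
  qed
  have H_decay: "H r * (1 - L * (t0 - r)) \<le> H t0" if "0 \<le> r" "r \<le> t0" for r
  proof -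
    have "integral {r<..<t0} g \<le> integral {r<..<t0} (\<lambda>_. L * H r)"
      using g_integrable[of r t0] g_le that
      by (intro integral_le) (auto simp: integrable_on_open_interval_real)
    also have "\<dots> = L * H r * (t0 - r)"
      using that by (simp flip: integral_open_interval_real)
    finally show ?thesis
      using H_increment[of r t0] that by (simp add: algebra_simps)
  qed
  obtain r where r: "0 \<le> r" "r < t0" "L * (t0 - r) \<le> 1 / 2"
  proof (cases "L \<le> 0")
    case True
    then have "L * (t0 - 0) \<le> 1 / 2"
      using \<open>0 < t0\<close> mult_nonpos_nonneg[of L t0] by simp
    then show ?thesis
      using that[of 0] \<open>0 < t0\<close> by simp
  next
    case False
    define r where "r = max 0 (t0 - 1 / (2 * L))"
    have "L * (t0 - r) \<le> L * (1 / (2 * L))"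
      using False by (intro mult_left_mono) (auto simp: r_def)
    then show ?thesis
      using that[of r] False \<open>0 < t0\<close> by (simp add: r_def)
  qed
  have "0 < H r * (1 - L * (t0 - r))"
    using H_pos[OF r(1,2)] r(3) by simp
  then have "0 < H t0"
    using H_decay[of r] r by linarith
  then show ?thesis
    using pos[of t0] \<open>0 < t0\<close> \<open>t0 \<le> T\<close> by (simp add: H_def)
qed

lemma attenuation_eq_strict_mono:
  assumes eq1: "attenuation_eq a b c1 T \<phi>1" and eq2: "attenuation_eq a b c2 T \<phi>2"
    and "0 < c2" "c2 < c1"
    and coeff: "\<And>s. 0 < s \<Longrightarrow> s \<le> T \<Longrightarrow> 0 \<le> a s \<and> 0 \<le> b s \<and> b s \<le> B"
    and t: "t \<in> {0..T}"
  shows "\<phi>2 t < \<phi>1 t"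
proof (rule ccontr)
  assume "\<not> \<phi>2 t < \<phi>1 t"
  define S where "S = {t \<in> {0..T}. \<phi>1 t \<le> \<phi>2 t}"
  have "closed S"
    unfolding S_def using attenuation_eq_continuous[OF eq1] attenuation_eq_continuous[OF eq2]
    by (intro continuous_on_closed_Collect_le) auto
  moreover have "S \<noteq> {}" "bdd_below S"
    using t \<open>\<not> \<phi>2 t < \<phi>1 t\<close> by (auto simp: S_def intro!: bdd_belowI[of _ 0])
  ultimately have t0: "Inf S \<in> S"
    by (rule closed_contains_Inf[rotated 2])
  have "Inf S \<noteq> 0"
    using t0 attenuation_eq_initial[OF eq1] attenuation_eq_initial[OF eq2] \<open>c2 < c1\<close>
    by (auto simp: S_def)
  then have "0 < Inf S" "Inf S \<le> T"
    using t0 by (auto simp: S_def)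
  moreover have "\<phi>2 s < \<phi>1 s" if "0 \<le> s" "s < Inf S" for s
    using that cInf_lower[OF _ \<open>bdd_below S\<close>, of s] \<open>Inf S \<le> T\<close> by (force simp: S_def)
  ultimately have "\<phi>2 (Inf S) < \<phi>1 (Inf S)"
    using attenuation_eq_less_persists[OF eq1 eq2 _ \<open>0 < c2\<close> coeff] \<open>0 < c2\<close> \<open>c2 < c1\<close> by simp
  then show False
    using t0 by (simp add: S_def)
qed

theorem lemma3p1:
  fixes \<Omega> :: "'a::euclidean_space set"
    and \<sigma>a \<sigma>b :: "'a \<Rightarrow> real"
    and g1 g2 :: "'a \<Rightarrow> real"
    and \<phi>1 \<phi>2 :: "real \<Rightarrow> real"
    and x v' :: 'a
  assumes "bounded \<Omega>" and "convex \<Omega>"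
    and "\<forall>y\<in>\<Omega>. \<sigma>a y > 0" and "\<exists>M. \<forall>y\<in>\<Omega>. \<sigma>a y \<le> M"
    and "\<forall>y\<in>\<Omega>. \<sigma>b y > 0" and "\<exists>M. \<forall>y\<in>\<Omega>. \<sigma>b y \<le> M"
    and "norm v' = 1" and "x \<in> \<Omega>"
    and "\<forall>y\<in>frontier \<Omega>. g1 y > g2 y \<and> g2 y > 0"
    and "\<forall>t\<in>{0..tau_minus \<Omega> x v'}.
           (\<lambda>s. \<sigma>a ((x - tau_minus \<Omega> x v' *\<^sub>R v') + s *\<^sub>R v')
                + \<sigma>b ((x - tau_minus \<Omega> x v' *\<^sub>R v') + s *\<^sub>R v') * \<phi>1 s) integrable_on {0..t}
         \<and> \<phi>1 t = g1 (x - tau_minus \<Omega> x v' *\<^sub>R v') *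
             exp (- integral {0..t} (\<lambda>s. \<sigma>a ((x - tau_minus \<Omega> x v' *\<^sub>R v') + s *\<^sub>R v')
                + \<sigma>b ((x - tau_minus \<Omega> x v' *\<^sub>R v') + s *\<^sub>R v') * \<phi>1 s))"
    and "\<forall>t\<in>{0..tau_minus \<Omega> x v'}.
           (\<lambda>s. \<sigma>a ((x - tau_minus \<Omega> x v' *\<^sub>R v') + s *\<^sub>R v')
                + \<sigma>b ((x - tau_minus \<Omega> x v' *\<^sub>R v') + s *\<^sub>R v') * \<phi>2 s) integrable_on {0..t}
         \<and> \<phi>2 t = g2 (x - tau_minus \<Omega> x v' *\<^sub>R v') *
             exp (- integral {0..t} (\<lambda>s. \<sigma>a ((x - tau_minus \<Omega> x v' *\<^sub>R v') + s *\<^sub>R v')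
                + \<sigma>b ((x - tau_minus \<Omega> x v' *\<^sub>R v') + s *\<^sub>R v') * \<phi>2 s))"
  shows "\<forall>t\<in>{0..tau_minus \<Omega> x v'}. \<phi>1 t > \<phi>2 t"
proof
  fix t assume t: "t \<in> {0..tau_minus \<Omega> x v'}"
  define T where "T = tau_minus \<Omega> x v'"
  define x' where "x' = x - T *\<^sub>R v'"
  have "v' \<noteq> 0"
    using assms(7) by auto
  have on_segment: "x' + s *\<^sub>R v' \<in> \<Omega>" if "0 < s" "s \<le> T" for s
    using backward_point_in_convex[OF assms(2,8), of "T - s" v'] that
    by (simp add: T_def x'_def algebra_simps)
  have "x' \<in> frontier \<Omega>"
    unfolding x'_def T_def using assms(1) \<open>v' \<noteq> 0\<close> assms(8) by (rule backward_exit_point_in_frontier)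
  then have "0 < g2 x'" "g2 x' < g1 x'"
    using assms(9) by auto
  obtain B where B: "\<forall>y\<in>\<Omega>. \<sigma>b y \<le> B"
    using assms(6) by blast
  have coeff: "0 \<le> \<sigma>a (x' + s *\<^sub>R v') \<and> 0 \<le> \<sigma>b (x' + s *\<^sub>R v') \<and> \<sigma>b (x' + s *\<^sub>R v') \<le> B"
    if "0 < s" "s \<le> T" for s
    using on_segment[OF that] assms(3,5) B by (auto simp: less_imp_le)
  have eq1: "attenuation_eq (\<lambda>s. \<sigma>a (x' + s *\<^sub>R v')) (\<lambda>s. \<sigma>b (x' + s *\<^sub>R v')) (g1 x') T \<phi>1"
    using assms(10) by (simp add: attenuation_eq_def T_def x'_def)
  have eq2: "attenuation_eq (\<lambda>s. \<sigma>a (x' + s *\<^sub>R v')) (\<lambda>s. \<sigma>b (x' + s *\<^sub>R v')) (g2 x') T \<phi>2"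
    using assms(11) by (simp add: attenuation_eq_def T_def x'_def)
  show "\<phi>2 t < \<phi>1 t"
    using attenuation_eq_strict_mono[OF eq1 eq2 \<open>0 < g2 x'\<close> \<open>g2 x' < g1 x'\<close> coeff] t
    by (simp add: T_def)
qed

end
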